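(* Fix $c \in (0,1)$. For every $\eta>0$ there is $q_0$ such that for every $q\ge q_0$ and every primitive Dirichlet character $\chi$ modulo $q$ whose order $d$ satisfies $d \geq e^{(\log q)^c}$, $$\sum_{\substack{p \leq q \\ \chi(p) \neq 1}} \frac{1}{p} \geq (c-\eta) \log\log q.$$
   Context: Sums over $p$ are over primes. *)

theory Defs
  imports "HOL-Analysis.Analysis" "HOL-Number_Theory.Number_Theory"
begin

definition dirichlet_character :: "nat \<Rightarrow> (nat \<Rightarrow> complex) \<Rightarrow> bool" where
  "dirichlet_character q \<psi> \<longleftrightarrow> q > 0 \<and> (\<forall>n. \<psi> (n + q) = \<psi> n) \<and>
     (\<forall>m n. \<psi> (m * n) = \<psi> m * \<psi> n) \<and> \<psi> 1 = 1 \<and>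
     (\<forall>n. \<psi> n = 0 \<longleftrightarrow> \<not> coprime n q)"

definition induced_modulus :: "nat \<Rightarrow> (nat \<Rightarrow> complex) \<Rightarrow> nat \<Rightarrow> bool" where
  "induced_modulus q \<psi> d \<longleftrightarrow> d dvd q \<and>
     (\<forall>n. coprime n q \<and> [n = 1] (mod d) \<longrightarrow> \<psi> n = 1)"

definition primitive_character :: "nat \<Rightarrow> (nat \<Rightarrow> complex) \<Rightarrow> bool" where
  "primitive_character q \<psi> \<longleftrightarrow> dirichlet_character q \<psi> \<and>
     (\<forall>d. d < q \<longrightarrow> \<not> induced_modulus q \<psi> d)"

definition character_order :: "nat \<Rightarrow> (nat \<Rightarrow> complex) \<Rightarrow> nat" where
  "character_order q \<psi> = (LEAST k. k > 0 \<and> (\<forall>n. coprime n q \<longrightarrow> \<psi> n ^ k = 1))"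

end

(*
  Suppose the primes p <= q outside the kernel of \<psi> have reciprocal sum below (c - \<eta>) log log q.
  Cut the range (exp ((log q)^(1 - ca)), q] into about ca log log q / \<epsilon> intervals (a, b] with
  log b = (1 + \<epsilon>) log a, where \<epsilon> = (log q)^(cb - 1) and ca < cb < c.  By Mertens' estimate
  every interval carries prime reciprocal mass about \<epsilon>, so by pigeonhole one of them has
  kernel-prime mass at least \<mu> \<epsilon> for a fixed small \<mu>, hence at least \<mu> \<epsilon> a kernel primes.
  Products of k ~ log q / log b distinct such primes give at least (\<mu> \<epsilon> a / k)^k distinct kernel
  elements below b^k ~ q, whereas below any multiple N q there are at most N q / d of them, d the
  order of \<psi>.  Comparing the two counts gives log d < (log q)^c, contradicting the hypothesis on d.
*)

theory Submission
  imports Defs "HOL-Real_Asymp.Real_Asymp"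
begin

section \<open>Dirichlet characters and their kernel\<close>

lemma dirichlet_characterD:
  assumes "dirichlet_character q \<psi>"
  shows "q > 0" "\<psi> (m * n) = \<psi> m * \<psi> n" "\<psi> 1 = 1" "\<psi> n = 0 \<longleftrightarrow> \<not> coprime n q"
  using assms unfolding dirichlet_character_def by auto

lemma dirichlet_character_mod:
  assumes "dirichlet_character q \<psi>"
  shows "\<psi> (n mod q) = \<psi> n"
proof -
  have "\<psi> (m + k * q) = \<psi> m" for m k
  proof (induction k)
    case (Suc k)
    have "\<psi> (m + Suc k * q) = \<psi> ((m + k * q) + q)"
      by (simp add: algebra_simps)
    with Suc assms show ?case
      unfolding dirichlet_character_def by simp
  qed simp
  from this [of "n mod q" "n div q"] show ?thesis by simp
qed

lemma dirichlet_character_prod: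
  assumes "dirichlet_character q \<psi>" "finite B"
  shows "\<psi> (\<Prod>B) = (\<Prod>p\<in>B. \<psi> p)"
  using assms(2) dirichlet_characterD(3) [OF assms(1)]
  by induction (simp_all add: dirichlet_characterD(2) [OF assms(1)])

lemma pow_card_eq_one_if_mult_closed:
  fixes G :: "'a :: field set"
  assumes "finite G" "0 \<notin> G" "\<And>x y. x \<in> G \<Longrightarrow> y \<in> G \<Longrightarrow> x * y \<in> G" "z \<in> G"
  shows "z ^ card G = 1"
proof -
  have inj: "inj_on ((*) z) G"
    using assms(2,4) by (auto simp: inj_on_def)
  then have "(*) z ` G = G"
    using assms by (intro endo_inj_surj) auto
  then have "\<Prod>G = prod ((*) z) G"
    using prod.reindex [OF inj, of id] by simp
  also have "\<dots> = z ^ card G * \<Prod>G"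
    by (simp add: prod.distrib)
  finally show ?thesis
    using assms(1,2) by simp
qed

lemma character_values_mult_closed:
  assumes \<psi>: "dirichlet_character q \<psi>"
    and "x \<in> \<psi> ` {x \<in> {..<q}. coprime x q}" "y \<in> \<psi> ` {x \<in> {..<q}. coprime x q}"
  shows "x * y \<in> \<psi> ` {x \<in> {..<q}. coprime x q}"
proof -
  obtain a b where "a < q" "coprime a q" "x = \<psi> a" "b < q" "coprime b q" "y = \<psi> b"
    using assms(2,3) by auto
  then have "(a * b) mod q \<in> {x \<in> {..<q}. coprime x q}" "x * y = \<psi> ((a * b) mod q)"
    using \<psi> by (simp_all add: dirichlet_characterD dirichlet_character_mod)
  then show ?thesis by blast
qed

lemma character_order_bounds:
  assumes \<psi>: "dirichlet_character q \<psi>"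
  shows "0 < character_order q \<psi>"
    and "character_order q \<psi> \<le> card (\<psi> ` {x \<in> {..<q}. coprime x q})"
proof -
  define G where "G = \<psi> ` {x \<in> {..<q}. coprime x q}"
  have q: "q > 0"
    using \<psi> by (rule dirichlet_characterD)
  have in_G: "\<psi> n \<in> G" if "coprime n q" for n
  proof -
    have "n mod q \<in> {x \<in> {..<q}. coprime x q}"
      using that q by simp
    then show ?thesis
      unfolding G_def dirichlet_character_mod [OF \<psi>, of n, symmetric] by (rule imageI)
  qed
  have "0 \<notin> G"
    using \<psi> by (auto simp: G_def dirichlet_characterD)
  then have "\<psi> n ^ card G = 1" if "coprime n q" for n
    using in_G [OF that] character_values_mult_closed [OF \<psi>]
    by (intro pow_card_eq_one_if_mult_closed) (auto simp: G_def)
  moreover have "card G > 0"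
    using in_G [of 1] by (auto simp: G_def card_gt_0_iff)
  ultimately have card_G: "0 < card G \<and> (\<forall>n. coprime n q \<longrightarrow> \<psi> n ^ card G = 1)"
    by blast
  show "0 < character_order q \<psi>"
    unfolding character_order_def by (rule conjunct1 [OF LeastI [of _ "card G"]]) (rule card_G)
  show "character_order q \<psi> \<le> card G"
    unfolding character_order_def using card_G by (rule Least_le)
qed

text \<open>The value group and the kernel of \<open>\<psi>\<close> on the units modulo \<open>q\<close> embed into the units via
  \<open>(g, r) \<mapsto> a\<^sub>g r mod q\<close>, where \<open>\<psi> a\<^sub>g = g\<close>.\<close>

lemma card_values_mult_card_kernel_le:
  assumes \<psi>: "dirichlet_character q \<psi>"
  shows "card (\<psi> ` {x \<in> {..<q}. coprime x q}) * card {r \<in> {..<q}. \<psi> r = 1} \<le> q"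
proof -
  define U where "U = {x \<in> {..<q}. coprime x q}"
  define K where "K = {r \<in> {..<q}. \<psi> r = 1}"
  define a where "a = inv_into U \<psi>"
  have q: "q > 0"
    using \<psi> by (rule dirichlet_characterD)
  have a: "a g \<in> U" "\<psi> (a g) = g" if "g \<in> \<psi> ` U" for g
    using that by (auto simp: a_def inv_into_into f_inv_into_f)
  have K_coprime: "coprime r q" if "r \<in> K" for r
    using that dirichlet_characterD(4) [OF \<psi>, of r] by (auto simp: K_def)
  have \<psi>_a_mult: "\<psi> (a g * r mod q) = g" if "g \<in> \<psi> ` U" "r \<in> K" for g r
    using that a [OF that(1)]
    by (simp add: K_def dirichlet_character_mod [OF \<psi>] dirichlet_characterD(2) [OF \<psi>])
  have "g = g' \<and> r = r'"
    if g: "g \<in> \<psi> ` U" "g' \<in> \<psi> ` U" and r: "r \<in> K" "r' \<in> K"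
      and eq: "a g * r mod q = a g' * r' mod q" for g r g' r'
  proof
    show "g = g'"
      using \<psi>_a_mult [OF g(1) r(1)] \<psi>_a_mult [OF g(2) r(2)] eq by simp
    have "coprime (a g) q"
      using a(1) [OF g(1)] by (simp add: U_def)
    moreover have "[a g * r = a g * r'] (mod q)"
      using eq \<open>g = g'\<close> by (simp add: cong_def)
    ultimately have "[r = r'] (mod q)"
      using cong_mult_lcancel_nat by blast
    then show "r = r'"
      using r by (simp add: K_def cong_def)
  qed
  then have "inj_on (\<lambda>(g, r). a g * r mod q) (\<psi> ` U \<times> K)"
    unfolding inj_on_def by (simp only: split_paired_Ball_Sigma prod.case) blast
  moreover have "(\<lambda>(g, r). a g * r mod q) ` (\<psi> ` U \<times> K) \<subseteq> U"
    using a(1) K_coprime q by (auto simp: U_def)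
  ultimately have "card (\<psi> ` U \<times> K) \<le> card U"
    by (intro card_inj_on_le) (simp_all add: U_def)
  also have "\<dots> \<le> q"
    using card_mono [of "{..<q}" U] by (auto simp: U_def)
  finally show ?thesis
    by (simp add: U_def K_def card_cartesian_product)
qed

lemma card_kernel_le:
  assumes \<psi>: "dirichlet_character q \<psi>"
  shows "card {n \<in> {..<N * q}. \<psi> n = 1} \<le> N * card {r \<in> {..<q}. \<psi> r = 1}"
proof -
  have q: "q > 0"
    using \<psi> by (rule dirichlet_characterD)
  have "inj_on (\<lambda>n. (n mod q, n div q)) {n \<in> {..<N * q}. \<psi> n = 1}"
    by (rule inj_onI) (metis div_mult_mod_eq prod.inject)
  moreover have "(\<lambda>n. (n mod q, n div q)) ` {n \<in> {..<N * q}. \<psi> n = 1}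
      \<subseteq> {r \<in> {..<q}. \<psi> r = 1} \<times> {..<N}"
    using q by (auto simp: dirichlet_character_mod [OF \<psi>] less_mult_imp_div_less)
  ultimately have "card {n \<in> {..<N * q}. \<psi> n = 1} \<le> card ({r \<in> {..<q}. \<psi> r = 1} \<times> {..<N})"
    by (intro card_inj_on_le) simp_all
  then show ?thesis
    by (simp add: card_cartesian_product mult.commute)
qed

lemma card_kernel_mult_order_le:
  assumes \<psi>: "dirichlet_character q \<psi>"
  shows "card {n \<in> {..<N * q}. \<psi> n = 1} * character_order q \<psi> \<le> N * q"
proof -
  have "card {n \<in> {..<N * q}. \<psi> n = 1} * character_order q \<psi>
      \<le> (N * card {r \<in> {..<q}. \<psi> r = 1}) * card (\<psi> ` {x \<in> {..<q}. coprime x q})"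
    using card_kernel_le [OF \<psi>] character_order_bounds(2) [OF \<psi>] by (rule mult_le_mono)
  also have "\<dots> \<le> N * q"
    using card_values_mult_card_kernel_le [OF \<psi>] by (simp add: mult.assoc mult.commute)
  finally show ?thesis .
qed

section \<open>Chebyshev and Mertens estimates\<close>

lemma prod_primes_dvd:
  fixes n :: nat
  assumes "finite P" "\<And>p. p \<in> P \<Longrightarrow> prime p" "\<And>p. p \<in> P \<Longrightarrow> p dvd n"
  shows "\<Prod>P dvd n"
  using assms
proof (induction P rule: finite_induct)
  case (insert p P)
  then have "coprime p (\<Prod>P)"
    by (metis insertCI prime_dvd_prod_iff primes_dvd_imp_eq prime_imp_coprime)
  with insert show ?case
    by (simp add: divides_mult)
qed simp

lemma binomial_odd_middle_le: "(2 * m + 1) choose m \<le> 4 ^ m"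
proof -
  have "(2 * m + 1) choose m \<le> (\<Sum>k\<le>m. (2 * m + 1) choose k)"
    by (rule member_le_sum) auto
  also have "\<dots> = 2 ^ (2 * m)"
    by (rule binomial_r_part_sum)
  also have "\<dots> = 4 ^ m"
    by (simp add: power_mult)
  finally show ?thesis .
qed

lemma prod_primes_dvd_binomial_odd_middle:
  "\<Prod>{p. prime p \<and> m + 1 < p \<and> p \<le> 2 * m + 1} dvd (2 * m + 1) choose m"
proof (rule prod_primes_dvd)
  fix p assume p: "p \<in> {p. prime p \<and> m + 1 < p \<and> p \<le> 2 * m + 1}"
  then show "prime p" by simp
  have "fact m * fact (m + 1) * ((2 * m + 1) choose m) = (fact (2 * m + 1) :: nat)"
    using binomial_fact_lemma [of m "2 * m + 1"] by simp
  moreover have "p dvd fact (2 * m + 1)" "\<not> p dvd fact m" "\<not> p dvd fact (m + 1)"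
    using p by (auto simp: prime_dvd_fact_iff simp del: fact_Suc)
  ultimately show "p dvd (2 * m + 1) choose m"
    using p by (metis prime_dvd_mult_iff mem_Collect_eq)
qed simp

lemma prod_primes_odd_middle_le: "\<Prod>{p. prime p \<and> m + 1 < p \<and> p \<le> 2 * m + 1} \<le> 4 ^ m"
proof -
  have "\<Prod>{p. prime p \<and> m + 1 < p \<and> p \<le> 2 * m + 1} \<le> (2 * m + 1) choose m"
    by (rule dvd_imp_le [OF prod_primes_dvd_binomial_odd_middle]) simp
  then show ?thesis
    using binomial_odd_middle_le by (rule le_trans)
qed

lemma primorial_le_four_pow: "\<Prod>{p. prime p \<and> p \<le> n} \<le> 4 ^ n"
proof (induction n rule: less_induct)
  case (less n)
  consider "n \<le> 2" | "n > 2" "even n" | m where "n = 2 * m + 1" "m \<ge> 1"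
  proof (cases "n \<le> 2 \<or> even n")
    case False
    then obtain m where "n = 2 * m + 1"
      by (blast elim: oddE)
    with False show ?thesis
      using that(3) by simp
  qed (use that(1,2) in linarith)
  then show ?case
  proof cases
    case 1
    then have "{p. prime p \<and> p \<le> n} \<subseteq> {2}"
      using prime_ge_2_nat by (auto intro: antisym)
    then have "\<Prod>{p. prime p \<and> p \<le> n} dvd \<Prod>{2::nat}"
      by (intro prod_dvd_prod_subset) simp_all
    then have "\<Prod>{p. prime p \<and> p \<le> n} \<le> 2"
      by (simp add: dvd_imp_le)
    moreover have "\<Prod>{p. prime p \<and> p \<le> n} = 1" if "n < 2"
      using that by (intro prod.neutral) (auto dest!: prime_ge_2_nat)
    moreover have "(2::nat) \<le> 4 ^ n" if "n \<ge> 1"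
      using power_increasing [OF that, of "4::nat"] by simp
    ultimately show ?thesis
      by (cases "n < 2") simp_all
  next
    case 2
    then have "\<not> prime n"
      using prime_odd_nat [of n] by auto
    then have "{p. prime p \<and> p \<le> n} = {p. prime p \<and> p \<le> n - 1}"
      by (intro Collect_cong) (auto simp: le_diff_conv2 le_less less_Suc_eq_le [symmetric])
    then have "\<Prod>{p. prime p \<and> p \<le> n} \<le> 4 ^ (n - 1)"
      using less [of "n - 1"] 2 by simp
    also have "\<dots> \<le> 4 ^ n"
      by (intro power_increasing) auto
    finally show ?thesis .
  next
    case 3
    have "{p. prime p \<and> p \<le> n}
        = {p. prime p \<and> p \<le> m + 1} \<union> {p. prime p \<and> m + 1 < p \<and> p \<le> 2 * m + 1}"
      using 3 by auto
    then have "\<Prod>{p. prime p \<and> p \<le> n}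
        = \<Prod>{p. prime p \<and> p \<le> m + 1} * \<Prod>{p. prime p \<and> m + 1 < p \<and> p \<le> 2 * m + 1}"
      by (simp only:) (rule prod.union_disjoint, auto)
    also have "\<dots> \<le> 4 ^ (m + 1) * 4 ^ m"
      using less [of "m + 1"] 3 prod_primes_odd_middle_le by (intro mult_le_mono) simp_all
    also have "\<dots> = 4 ^ n"
      using 3 by (simp add: power_add [symmetric])
    finally show ?thesis .
  qed
qed

lemma sum_ln_primes_le: "(\<Sum>p | prime p \<and> p \<le> n. ln (real p)) \<le> real n * ln 4"
proof -
  have "(\<Sum>p | prime p \<and> p \<le> n. ln (real p)) = ln (real (\<Prod>{p. prime p \<and> p \<le> n}))"
    using ln_prod [of "{p. prime p \<and> p \<le> n}" real] by (simp add: prime_gt_0_nat)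
  also have "\<dots> \<le> ln (real (4 ^ n))"
    using primorial_le_four_pow [of n] prime_gt_0_nat
    by (intro ln_mono of_nat_mono) (auto intro!: prod_pos)
  also have "\<dots> = real n * ln 4"
    by (simp add: ln_realpow)
  finally show ?thesis .
qed

lemma card_multiples_atLeastAtMost:
  fixes m n :: nat
  assumes "m > 0"
  shows "card {k \<in> {1..n}. m dvd k} = n div m"
proof -
  have "{k \<in> {1..n}. m dvd k} = (*) m ` {1..n div m}"
    using assms by (auto simp: less_eq_div_iff_mult_less_eq mult.commute)
  moreover have "inj_on ((*) m) {1..n div m}"
    using assms by (auto simp: inj_on_def)
  ultimately show ?thesis
    by (simp add: card_image)
qed

lemma multiplicity_eq_card_prime_powers_dvd:
  fixes p k n :: nat
  assumes "prime p" "1 \<le> k" "k \<le> n"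
  shows "multiplicity p k = card {a \<in> {1..n}. p ^ a dvd k}"
proof -
  have "multiplicity p k < 2 ^ multiplicity p k"
    by (rule less_exp)
  also have "\<dots> \<le> p ^ multiplicity p k"
    using prime_ge_2_nat [OF assms(1)] by (intro power_mono) auto
  also have "\<dots> \<le> k"
    using assms(2) by (intro dvd_imp_le multiplicity_dvd) auto
  moreover have "p ^ a dvd k \<longleftrightarrow> a \<le> multiplicity p k" for a
    using assms(2) prime_elem_not_unit [OF prime_imp_prime_elem [OF assms(1)]]
    by (intro power_dvd_iff_le_multiplicity) simp_all
  ultimately have "{a \<in> {1..n}. p ^ a dvd k} = {1..multiplicity p k}"
    using assms(3) by (simp add: set_eq_iff) (meson le_trans less_imp_le_nat)
  then show ?thesis by simp
qed

lemma ln_eq_sum_multiplicity: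
  fixes k n :: nat
  assumes "1 \<le> k" "k \<le> n"
  shows "ln (real k) = (\<Sum>p | prime p \<and> p \<le> n. ln (real p) * real (multiplicity p k))"
proof -
  have "ln (real k) = ln (\<Prod>p\<in>prime_factors k. real p ^ multiplicity p k)"
    using prod_prime_factors [of k] assms(1) by (simp flip: of_nat_power of_nat_prod)
  also have "\<dots> = (\<Sum>p\<in>prime_factors k. ln (real p) * real (multiplicity p k))"
    by (subst ln_prod) (auto simp: ln_realpow mult.commute intro: prime_gt_0_nat)
  also have "\<dots> = (\<Sum>p | prime p \<and> p \<le> n. ln (real p) * real (multiplicity p k))"
  proof (rule sum.mono_neutral_left)
    have "p \<le> n" if "p \<in> prime_factors k" for p
      using that assms by (intro order.trans [OF dvd_imp_le assms(2)]) auto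
    then show "prime_factors k \<subseteq> {p. prime p \<and> p \<le> n}"
      by auto
  qed (auto simp: prime_factors_multiplicity)
  finally show ?thesis .
qed

lemma sum_multiplicity_eq_sum_div:
  assumes "prime p"
  shows "(\<Sum>k = 1..n. multiplicity p k) = (\<Sum>a = 1..n. n div p ^ a)"
proof -
  have "(\<Sum>k = 1..n. multiplicity p k) = (\<Sum>k = 1..n. card {a \<in> {1..n}. p ^ a dvd k})"
    using assms multiplicity_eq_card_prime_powers_dvd by (intro sum.cong refl) auto
  also have "\<dots> = (\<Sum>k = 1..n. \<Sum>a = 1..n. if p ^ a dvd k then 1 else 0)"
    by (simp add: sum.inter_filter [symmetric])
  also have "\<dots> = (\<Sum>a = 1..n. \<Sum>k = 1..n. if p ^ a dvd k then 1 else 0)"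
    by (rule sum.swap)
  also have "\<dots> = (\<Sum>a = 1..n. card {k \<in> {1..n}. p ^ a dvd k})"
    by (simp add: sum.inter_filter [symmetric])
  also have "\<dots> = (\<Sum>a = 1..n. n div p ^ a)"
    using assms card_multiples_atLeastAtMost prime_gt_0_nat by (intro sum.cong refl) auto
  finally show ?thesis .
qed

lemma ln_fact_eq_sum_primes:
  "ln (fact n) = (\<Sum>p | prime p \<and> p \<le> n. ln (real p) * (\<Sum>a = 1..n. real (n div p ^ a)))"
proof -
  have "ln (fact n :: real) = (\<Sum>k = 1..n. ln (real k))"
    by (subst ln_prod [symmetric]) (auto simp: fact_prod)
  also have "\<dots> = (\<Sum>k = 1..n. \<Sum>p | prime p \<and> p \<le> n. ln (real p) * real (multiplicity p k))"
    by (intro sum.cong refl ln_eq_sum_multiplicity) auto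
  also have "\<dots> = (\<Sum>p | prime p \<and> p \<le> n. ln (real p) * real (\<Sum>k = 1..n. multiplicity p k))"
    by (subst sum.swap) (simp add: sum_distrib_left)
  also have "\<dots> = (\<Sum>p | prime p \<and> p \<le> n. ln (real p) * (\<Sum>a = 1..n. real (n div p ^ a)))"
    by (intro sum.cong refl) (simp only: mem_Collect_eq sum_multiplicity_eq_sum_div of_nat_sum)
  finally show ?thesis .
qed

lemma ln_fact_le: "ln (fact n :: real) \<le> real n * ln (real n)"
proof (cases "n = 0")
  case False
  have "ln (fact n :: real) \<le> ln (real n ^ n)"
    using fact_le_power [of n] False by (intro ln_mono) (auto simp flip: of_nat_power)
  then show ?thesis
    using False by (simp add: ln_realpow)
qed simp

lemma ln_fact_ge: "real n * ln (real n) - real n \<le> ln (fact n :: real)"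
proof (cases "n = 0")
  case False
  have "real n ^ n / fact n \<le> exp (real n)"
  proof -
    have "(\<Sum>k\<in>{n}. real n ^ k /\<^sub>R fact k) \<le> (\<Sum>k. real n ^ k /\<^sub>R fact k)"
      by (intro sum_le_suminf summable_exp_generic) auto
    then show ?thesis
      by (simp add: exp_def divide_inverse mult.commute)
  qed
  then have "ln (real n ^ n) \<le> ln (fact n * exp (real n))"
    using False by (intro ln_mono) (auto simp: divide_le_eq mult.commute)
  then show ?thesis
    using False by (simp add: ln_realpow ln_mult)
qed simp

lemma sum_power_le_geometric:
  fixes x :: real
  assumes "0 \<le> x" "x < 1"
  shows "(\<Sum>a = 1..n. x ^ a) \<le> x / (1 - x)"
proof -
  have "(1 - x) * (\<Sum>a = 1..n. x ^ a) = x - x ^ Suc n"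
  proof (induction n)
    case (Suc n)
    have "(1 - x) * (\<Sum>a = 1..Suc n. x ^ a) = (1 - x) * (\<Sum>a = 1..n. x ^ a) + (1 - x) * x ^ Suc n"
      by (simp add: algebra_simps)
    also have "\<dots> = x - x ^ Suc (Suc n)"
      using Suc.IH by (simp add: algebra_simps)
    finally show ?case .
  qed simp
  then have "(1 - x) * (\<Sum>a = 1..n. x ^ a) \<le> x"
    using assms by simp
  then show ?thesis
    using assms by (simp add: field_simps)
qed

lemma ln_over_square_le_telescoping:
  assumes "j \<ge> 1"
  shows "ln (real j + 1) / ((real j + 1) * real j) \<le> 4 / sqrt (real j) - 4 / sqrt (real j + 1)"
proof -
  define s where "s = sqrt (real j)"
  define t where "t = sqrt (real j + 1)"
  have s: "s \<ge> 1" "s\<^sup>2 = real j" and t: "t > s" "t\<^sup>2 = real j + 1"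
    using assms by (simp_all add: s_def t_def)
  have "ln (real j + 1) \<le> ln ((1 + s)\<^sup>2)"
    using s by (intro ln_mono) (auto simp: power2_eq_square algebra_simps)
  also have "\<dots> \<le> 2 * s"
    using ln_add_one_self_le_self [of s] s by (simp add: ln_realpow)
  finally have "ln (real j + 1) / ((real j + 1) * real j) \<le> 2 * s / ((real j + 1) * real j)"
    using assms by (intro divide_right_mono) auto
  also have "\<dots> = 2 * s / (t\<^sup>2 * s\<^sup>2)"
    using s t by simp
  also have "\<dots> = 2 / (s * t\<^sup>2)"
    using s(1) by (simp add: field_simps power2_eq_square)
  also have "\<dots> = 4 / (2 * (s * t\<^sup>2))"
    by simp
  also have "\<dots> \<le> 4 / (s * t * (t + s))"
  proof (rule divide_left_mono)
    have "s * s * t \<le> s * t * t"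
      using s t by (intro mult_right_mono mult_left_mono) auto
    then show "s * t * (t + s) \<le> 2 * (s * t\<^sup>2)"
      by (simp add: algebra_simps power2_eq_square)
  qed (use s t in auto)
  also have "\<dots> = 4 / s - 4 / t"
  proof -
    have "4 / s - 4 / t = 4 * (t - s) / (s * t)"
      using s t by (simp add: field_simps)
    moreover have "t - s = 1 / (t + s)"
      using s t by (simp add: field_simps power2_eq_square)
    ultimately show ?thesis
      using s t by (simp add: field_simps)
  qed
  finally show ?thesis
    by (simp add: s_def t_def)
qed

lemma sum_ln_over_square_le: "(\<Sum>m = 2..n. ln (real m) / (real m * (real m - 1))) \<le> 4"
proof -
  have bound: "(\<Sum>m = 2..n. ln (real m) / (real m * (real m - 1))) \<le> 4 - 4 / sqrt (real n)"
    if "n \<ge> 1"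
    using that
  proof (induction n rule: dec_induct)
    case (step j)
    then have "(\<Sum>m = 2..Suc j. ln (real m) / (real m * (real m - 1)))
        = (\<Sum>m = 2..j. ln (real m) / (real m * (real m - 1)))
          + ln (real j + 1) / ((real j + 1) * real j)"
      by (simp add: add.commute)
    also have "\<dots> \<le> 4 - 4 / sqrt (real j + 1)"
      using step.IH ln_over_square_le_telescoping [OF step.hyps(1)] by linarith
    finally show ?case
      by (simp add: add.commute)
  qed simp
  show ?thesis
  proof (cases "n = 0")
    case False
    then have "(\<Sum>m = 2..n. ln (real m) / (real m * (real m - 1))) \<le> 4 - 4 / sqrt (real n)"
      by (intro bound) simp
    moreover have "4 / sqrt (real n) \<ge> 0"
      by simp
    ultimately show ?thesis
      by linarith
  qed simp
qed

lemma mertens_upper: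
  assumes "n \<ge> 1"
  shows "(\<Sum>p | prime p \<and> p \<le> n. ln (real p) / real p) \<le> ln (real n) + ln 4"
proof -
  have "(\<Sum>p | prime p \<and> p \<le> n. ln (real p) * (real n / real p - 1))
      \<le> (\<Sum>p | prime p \<and> p \<le> n. ln (real p) * (\<Sum>a = 1..n. real (n div p ^ a)))"
  proof (intro sum_mono mult_left_mono)
    fix p assume "p \<in> {p. prime p \<and> p \<le> n}"
    then have p: "prime p" "real p > 0"
      by (auto simp: prime_gt_0_nat)
    have "real n = real (n div p) * real p + real (n mod p)"
      by (metis div_mult_mod_eq of_nat_add of_nat_mult)
    moreover have "real (n mod p) < real p"
      using p by simp
    ultimately have "real n / real p - 1 \<le> real (n div p)"
      using p by (simp add: field_simps)
    also have "\<dots> \<le> (\<Sum>a = 1..n. real (n div p ^ a))"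
      using member_le_sum [of 1 "{1..n}" "\<lambda>a. real (n div p ^ a)"] assms by simp
    finally show "real n / real p - 1 \<le> (\<Sum>a = 1..n. real (n div p ^ a))" .
    show "0 \<le> ln (real p)"
      using p by (simp add: prime_ge_1_nat)
  qed
  also have "\<dots> \<le> real n * ln (real n)"
    using ln_fact_le [of n] by (simp add: ln_fact_eq_sum_primes)
  finally have "real n * (\<Sum>p | prime p \<and> p \<le> n. ln (real p) / real p)
      \<le> real n * ln (real n) + (\<Sum>p | prime p \<and> p \<le> n. ln (real p))"
    by (simp add: sum_distrib_left sum_subtractf algebra_simps)
  also have "\<dots> \<le> real n * (ln (real n) + ln 4)"
    using sum_ln_primes_le [of n] by (simp add: algebra_simps)
  finally show ?thesis
    using assms by (simp add: mult_le_cancel_left)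
qed

lemma sum_div_powers_le:
  assumes "p \<ge> 2"
  shows "(\<Sum>a = 1..k. real (n div p ^ a)) \<le> real n / (real p - 1)"
proof -
  have "(\<Sum>a = 1..k. real (n div p ^ a)) \<le> (\<Sum>a = 1..k. real n * (1 / real p) ^ a)"
    using of_nat_div_le_of_nat [of n "p ^ _", where 'a = real]
    by (intro sum_mono) (simp add: power_divide)
  also have "\<dots> = real n * (\<Sum>a = 1..k. (1 / real p) ^ a)"
    by (simp add: sum_distrib_left)
  also have "\<dots> \<le> real n * ((1 / real p) / (1 - 1 / real p))"
    using assms by (intro mult_left_mono sum_power_le_geometric) auto
  also have "\<dots> = real n / (real p - 1)"
    using assms by (simp add: field_simps)
  finally show ?thesis .
qed

lemma mertens_lower:
  assumes "n \<ge> 1"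
  shows "ln (real n) - 5 \<le> (\<Sum>p | prime p \<and> p \<le> n. ln (real p) / real p)"
proof -
  have "real n * ln (real n) - real n \<le> ln (fact n)"
    by (rule ln_fact_ge)
  also have "\<dots> \<le> (\<Sum>p | prime p \<and> p \<le> n. ln (real p) * (real n / (real p - 1)))"
    unfolding ln_fact_eq_sum_primes
    using sum_div_powers_le by (intro sum_mono mult_left_mono) (auto dest: prime_ge_2_nat)
  also have "\<dots> = real n * ((\<Sum>p | prime p \<and> p \<le> n. ln (real p) / real p)
      + (\<Sum>p | prime p \<and> p \<le> n. ln (real p) / (real p * (real p - 1))))"
  proof -
    have "ln (real p) * (real n / (real p - 1))
        = real n * (ln (real p) / real p + ln (real p) / (real p * (real p - 1)))"
      if "prime p" for p
      using prime_ge_2_nat [OF that] by (simp add: field_simps)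
    then show ?thesis
      by (simp add: sum_distrib_left sum.distrib [symmetric])
  qed
  also have "\<dots> \<le> real n * ((\<Sum>p | prime p \<and> p \<le> n. ln (real p) / real p) + 4)"
  proof -
    have "(\<Sum>p | prime p \<and> p \<le> n. ln (real p) / (real p * (real p - 1)))
        \<le> (\<Sum>m = 2..n. ln (real m) / (real m * (real m - 1)))"
      by (intro sum_mono2) (auto dest: prime_ge_2_nat)
    then show ?thesis
      using sum_ln_over_square_le [of n] by (intro mult_left_mono) auto
  qed
  finally have "real n * (ln (real n) - 5) \<le> real n * (\<Sum>p | prime p \<and> p \<le> n. ln (real p) / real p)"
    by (simp add: algebra_simps)
  then show ?thesis
    using assms by (simp add: mult_le_cancel_left)
qed

lemma primes_le_floor_eq:
  assumes "1 \<le> x"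
  shows "{p. prime p \<and> p \<le> nat \<lfloor>x\<rfloor>} = {p. prime p \<and> real p \<le> x}"
  using assms by (auto simp: le_nat_iff le_floor_iff)

lemma sum_ln_over_primes_between_ge:
  assumes "1 \<le> a" "a \<le> b"
  shows "ln b - ln a - 8 \<le> (\<Sum>p | prime p \<and> a < real p \<and> real p \<le> b. ln (real p) / real p)"
proof -
  define P where "P = {p. prime p \<and> a < real p \<and> real p \<le> b}"
  define m where "m = nat \<lfloor>a\<rfloor>"
  define n where "n = nat \<lfloor>b\<rfloor>"
  have "m \<ge> 1" "n \<ge> 1" "real n \<ge> 1" "real m \<le> a" "b < real n + 1"
    using assms by (auto simp: m_def n_def le_nat_floor)
  have "finite P"
    by (rule finite_subset [of _ "{..n}"]) (use assms in \<open>auto simp: P_def n_def le_nat_floor\<close>)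
  have "{p. prime p \<and> p \<le> n} = {p. prime p \<and> p \<le> m} \<union> P"
    "{p. prime p \<and> p \<le> m} \<inter> P = {}"
    using primes_le_floor_eq [of a] primes_le_floor_eq [of b] assms
    by (auto simp: P_def m_def n_def)
  then have "(\<Sum>p\<in>P. ln (real p) / real p)
      = (\<Sum>p | prime p \<and> p \<le> n. ln (real p) / real p) - (\<Sum>p | prime p \<and> p \<le> m. ln (real p) / real p)"
    using \<open>finite P\<close> by (simp add: sum.union_disjoint)
  also have "\<dots> \<ge> ln (real n) - 5 - (ln (real m) + ln 4)"
    using mertens_lower [OF \<open>n \<ge> 1\<close>] mertens_upper [OF \<open>m \<ge> 1\<close>] by linarith
  moreover have "ln (real m) \<le> ln a"
    using \<open>m \<ge> 1\<close> \<open>real m \<le> a\<close> by (intro ln_mono) auto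
  moreover have "ln b \<le> ln (2 * real n)"
    using assms \<open>real n \<ge> 1\<close> \<open>b < real n + 1\<close> by (intro ln_mono) linarith+
  moreover have "ln (2 * real n) = ln 2 + ln (real n)" "ln 4 = 2 * ln (2 :: real)"
    using \<open>n \<ge> 1\<close> ln_mult [of 2 2] by (simp_all add: ln_mult)
  ultimately show ?thesis
    using ln_2_less_1 by (simp add: P_def)
qed

lemma sum_inverse_primes_between_ge:
  assumes "1 \<le> a" "a \<le> b"
  shows "(ln b - ln a - 8) / ln b \<le> (\<Sum>p | prime p \<and> a < real p \<and> real p \<le> b. 1 / real p)"
proof (cases "b = 1")
  case False
  define P where "P = {p. prime p \<and> a < real p \<and> real p \<le> b}"
  have "ln b > 0"
    using assms False by simp
  have "ln b - ln a - 8 \<le> (\<Sum>p\<in>P. ln (real p) / real p)"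
    unfolding P_def using assms by (rule sum_ln_over_primes_between_ge)
  also have "\<dots> \<le> (\<Sum>p\<in>P. ln b / real p)"
  proof (intro sum_mono divide_right_mono)
    fix p assume "p \<in> P"
    then show "ln (real p) \<le> ln b"
      by (intro ln_mono) (auto simp: P_def prime_gt_0_nat)
  qed simp
  also have "\<dots> = ln b * (\<Sum>p\<in>P. 1 / real p)"
    by (simp add: sum_distrib_left)
  finally show ?thesis
    using \<open>ln b > 0\<close> by (simp add: P_def pos_divide_le_eq mult.commute)
qed (use assms in \<open>simp add: sum_nonneg\<close>)

lemma sum_inverse_primes_geometric_interval_ge:
  assumes "0 < \<epsilon>" "0 < Y" "Y \<le> l / (1 + \<epsilon>)"
  shows "\<epsilon> / (1 + \<epsilon>) - 8 / Y
    \<le> (\<Sum>p | prime p \<and> exp (l / (1 + \<epsilon>)) < real p \<and> real p \<le> exp l. 1 / real p)"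
proof -
  have "Y \<le> Y * (1 + \<epsilon>)" "Y * (1 + \<epsilon>) \<le> l"
    using assms by (simp_all add: pos_le_divide_eq)
  then have "Y \<le> l"
    by linarith
  then have "\<epsilon> / (1 + \<epsilon>) - 8 / Y \<le> \<epsilon> / (1 + \<epsilon>) - 8 / l"
    using \<open>0 < Y\<close> by (simp add: frac_le)
  also have "\<dots> = (ln (exp l) - ln (exp (l / (1 + \<epsilon>))) - 8) / ln (exp l)"
    using \<open>Y \<le> l\<close> \<open>0 < Y\<close> \<open>0 < \<epsilon>\<close> by (simp add: field_simps)
  also have "\<dots> \<le> (\<Sum>p | prime p \<and> exp (l / (1 + \<epsilon>)) < real p \<and> real p \<le> exp l. 1 / real p)"
    using assms \<open>Y \<le> l\<close> by (intro sum_inverse_primes_between_ge) (simp_all add: divide_le_eq)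
  finally show ?thesis .
qed

section \<open>Kernel primes and the order of a character\<close>

lemma prime_set_eq_divisors_of_prod:
  assumes "finite B" "B \<subseteq> P" "\<And>p. p \<in> P \<Longrightarrow> prime (p :: nat)"
  shows "B = {p \<in> P. p dvd \<Prod>B}"
proof (intro equalityI subsetI)
  fix p assume "p \<in> {p \<in> P. p dvd \<Prod>B}"
  then obtain x where "x \<in> B" "p dvd x" "prime p"
    using assms prime_dvd_prod_iff [of B p id] by auto
  then show "p \<in> B"
    using assms primes_dvd_imp_eq by blast
qed (use assms in auto)

text \<open>Distinct \<open>k\<close>-element sets of primes \<open>\<le> b\<close> in the kernel have distinct products,
  all of them kernel elements below \<open>b\<^sup>k\<close>.\<close>

lemma card_choose_le_card_kernel:
  assumes \<psi>: "dirichlet_character q \<psi>" and "finite P"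
    and P: "\<And>p. p \<in> P \<Longrightarrow> prime p \<and> \<psi> p = 1 \<and> real p \<le> b" and "b ^ k < real M"
  shows "card P choose k \<le> card {n \<in> {..<M}. \<psi> n = 1}"
proof -
  have "card P choose k = card {B. B \<subseteq> P \<and> card B = k}"
    using \<open>finite P\<close> by (rule n_subsets [symmetric])
  also have "\<dots> \<le> card {n \<in> {..<M}. \<psi> n = 1}"
  proof (rule card_inj_on_le)
    show "inj_on \<Prod> {B. B \<subseteq> P \<and> card B = k}"
    proof (rule inj_onI)
      fix B B' assume "B \<in> {B. B \<subseteq> P \<and> card B = k}" "B' \<in> {B. B \<subseteq> P \<and> card B = k}"
        and "\<Prod>B = \<Prod>B'"
      moreover from this have "finite B" "finite B'"
        using \<open>finite P\<close> finite_subset by auto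
      ultimately show "B = B'"
        using prime_set_eq_divisors_of_prod [of B P] prime_set_eq_divisors_of_prod [of B' P] P
        by auto
    qed
    show "\<Prod> ` {B. B \<subseteq> P \<and> card B = k} \<subseteq> {n \<in> {..<M}. \<psi> n = 1}"
    proof (rule image_subsetI)
      fix B assume "B \<in> {B. B \<subseteq> P \<and> card B = k}"
      then have B: "B \<subseteq> P" "k = card B"
        by simp_all
      then have "finite B"
        using \<open>finite P\<close> finite_subset by blast
      have "(\<Prod>p\<in>B. real p) \<le> (\<Prod>p\<in>B. b)"
        using B P by (intro prod_mono) auto
      then have "real (\<Prod>B) < real M"
        using B \<open>b ^ k < real M\<close> by simp
      then have "\<Prod>B < M"
        by (simp only: of_nat_less_iff)
      moreover have "\<psi> (\<Prod>B) = 1"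
        using dirichlet_character_prod [OF \<psi> \<open>finite B\<close>] B P by (auto intro: prod.neutral)
      ultimately show "\<Prod>B \<in> {n \<in> {..<M}. \<psi> n = 1}"
        by simp
    qed
  qed simp
  finally show ?thesis .
qed

lemma character_order_bound_by_kernel_primes:
  assumes \<psi>: "dirichlet_character q \<psi>" and "finite P"
    and P: "\<And>p. p \<in> P \<Longrightarrow> prime p \<and> \<psi> p = 1 \<and> real p \<le> b"
    and "k \<le> card P" "real q \<le> b ^ k"
  shows "(real (card P) / real k) ^ k * real (character_order q \<psi>) \<le> 2 * b ^ k"
proof -
  define N where "N = nat \<lfloor>b ^ k / real q\<rfloor> + 1"
  have q: "real q > 0"
    using dirichlet_characterD(1) [OF \<psi>] by simp
  then have "b ^ k / real q < real N" "real N \<le> b ^ k / real q + 1"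
    using \<open>real q \<le> b ^ k\<close> by (auto simp: N_def) linarith
  then have N: "b ^ k < real (N * q)" "real (N * q) \<le> 2 * b ^ k"
    using q \<open>real q \<le> b ^ k\<close> by (auto simp: field_simps)
  have "(real (card P) / real k) ^ k \<le> real (card P choose k)"
    using \<open>k \<le> card P\<close> by (rule binomial_ge_n_over_k_pow_k)
  also have "\<dots> \<le> real (card {n \<in> {..<N * q}. \<psi> n = 1})"
    using card_choose_le_card_kernel [OF \<psi> \<open>finite P\<close> P N(1)] by simp
  finally have "(real (card P) / real k) ^ k * real (character_order q \<psi>)
      \<le> real (card {n \<in> {..<N * q}. \<psi> n = 1}) * real (character_order q \<psi>)"
    by (rule mult_right_mono) simp
  also have "\<dots> \<le> real (N * q)"
    using card_kernel_mult_order_le [OF \<psi>, of N]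
    by (simp only: of_nat_mult [symmetric] of_nat_le_iff)
  also have "\<dots> \<le> 2 * b ^ k"
    by (rule N(2))
  finally show ?thesis .
qed

lemma ln_character_order_le_of_kernel_mass:
  assumes \<psi>: "dirichlet_character q \<psi>" and "0 < a" "0 < b" "0 < m" "1 \<le> k" "real k \<le> m * a"
    and "ln (real q) \<le> real k * ln b"
    and mass: "m \<le> (\<Sum>p | prime p \<and> a < real p \<and> real p \<le> b \<and> \<psi> p = 1. 1 / real p)"
  shows "ln (real (character_order q \<psi>))
    \<le> ln 2 + real k * (ln b - ln a) + real k * ln (real k) - real k * ln m"
proof -
  define P where "P = {p. prime p \<and> a < real p \<and> real p \<le> b \<and> \<psi> p = 1}"
  have "finite P"
    by (rule finite_subset [of _ "{..nat \<lfloor>b\<rfloor>}"]) (auto simp: P_def le_nat_floor)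
  have "(\<Sum>p\<in>P. 1 / real p) \<le> (\<Sum>p\<in>P. 1 / a)"
    using \<open>0 < a\<close> by (intro sum_mono frac_le) (auto simp: P_def)
  then have "m \<le> (\<Sum>p\<in>P. 1 / a)"
    using mass by (simp add: P_def)
  then have card_P: "m * a \<le> real (card P)"
    using \<open>0 < a\<close> by (simp add: pos_le_divide_eq)
  have "real q \<le> b ^ k"
  proof (cases "q = 0")
    case False
    have "exp (ln (real q)) \<le> exp (real k * ln b)"
      using \<open>ln (real q) \<le> real k * ln b\<close> by simp
    with False have "real q \<le> exp (real k * ln b)"
      by simp
    then show ?thesis
      using \<open>0 < b\<close> by (simp add: exp_of_nat_mult)
  qed (use \<open>0 < b\<close> in simp)
  have "(m * a / real k) ^ k * real (character_order q \<psi>)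
      \<le> (real (card P) / real k) ^ k * real (character_order q \<psi>)"
    using card_P \<open>0 < a\<close> \<open>0 < m\<close> by (intro mult_right_mono power_mono divide_right_mono) auto
  also have "\<dots> \<le> 2 * b ^ k"
    using \<open>finite P\<close> \<open>real k \<le> m * a\<close> card_P \<open>real q \<le> b ^ k\<close>
    by (intro character_order_bound_by_kernel_primes [OF \<psi>]) (auto simp: P_def)
  finally have "ln ((m * a / real k) ^ k * real (character_order q \<psi>)) \<le> ln (2 * b ^ k)"
    using character_order_bounds(1) [OF \<psi>] \<open>0 < a\<close> \<open>0 < m\<close> \<open>1 \<le> k\<close> by (intro ln_mono) auto
  then show ?thesis
    using character_order_bounds(1) [OF \<psi>] \<open>0 < a\<close> \<open>0 < m\<close> \<open>1 \<le> k\<close> \<open>0 < b\<close>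
    by (simp add: ln_mult ln_div ln_realpow algebra_simps)
qed

section \<open>Pigeonholing over geometric intervals\<close>

lemma exists_part_with_large_mass:
  fixes w :: "'a \<Rightarrow> real" and I :: "nat \<Rightarrow> 'a set"
  assumes S: "finite S" "\<And>i. i < J \<Longrightarrow> I i \<subseteq> S" "disjoint_family_on I {..<J}"
    and w: "\<And>x. x \<in> S \<Longrightarrow> 0 \<le> w x" and mass: "\<And>i. i < J \<Longrightarrow> m \<le> sum w (I i)"
    and small: "sum w {x \<in> S. \<not> Q x} < real J * (m - t)"
  shows "\<exists>i<J. t \<le> sum w {x \<in> I i. Q x}"
proof (rule ccontr)
  assume "\<not> (\<exists>i<J. t \<le> sum w {x \<in> I i. Q x})"
  then have large: "m - t \<le> sum w {x \<in> I i. \<not> Q x}" if "i < J" for i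
  proof -
    have "finite (I i)"
      using S that by (meson finite_subset)
    then have "sum w (I i) = sum w {x \<in> I i. Q x} + sum w {x \<in> I i. \<not> Q x}"
      by (subst sum.union_disjoint [symmetric]) (auto intro: sum.cong)
    then show ?thesis
      using mass [OF that] \<open>\<not> (\<exists>i<J. _)\<close> that by force
  qed
  have "real J * (m - t) \<le> (\<Sum>i<J. sum w {x \<in> I i. \<not> Q x})"
    using sum_mono [of "{..<J}" "\<lambda>_. m - t", OF large] by simp
  also have "\<dots> = sum w (\<Union>i<J. {x \<in> I i. \<not> Q x})"
    using S by (intro sum.UNION_disjoint [symmetric])
      (auto simp: disjoint_family_on_def intro: finite_subset, blast)
  also have "\<dots> \<le> sum w {x \<in> S. \<not> Q x}"
    using S w by (intro sum_mono2) auto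
  finally show False
    using small by simp
qed

lemma disjoint_family_prime_intervals:
  fixes x :: "nat \<Rightarrow> real"
  assumes "decseq x"
  shows "disjoint_family (\<lambda>i. {p. prime p \<and> x (Suc i) < real p \<and> real p \<le> x i})"
proof -
  have disjoint: "{p. prime p \<and> x (Suc i) < real p \<and> real p \<le> x i}
      \<inter> {p. prime p \<and> x (Suc j) < real p \<and> real p \<le> x j} = {}" if "i < j" for i j
    using decseqD [OF assms, of "Suc i" j] that by auto
  show ?thesis
    unfolding disjoint_family_on_def
  proof (intro ballI impI)
    fix i j :: nat
    assume "i \<noteq> j"
    then consider "i < j" | "j < i"
      by linarith
    then show "{p. prime p \<and> x (Suc i) < real p \<and> real p \<le> x i}
        \<inter> {p. prime p \<and> x (Suc j) < real p \<and> real p \<le> x j} = {}"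
      by cases (auto dest: disjoint)
  qed
qed

lemma exists_interval_with_large_kernel_mass:
  fixes \<psi> :: "nat \<Rightarrow> complex"
  assumes "0 < \<epsilon>" "0 < Y" and J: "Y * (1 + \<epsilon>) ^ J \<le> ln (real q)"
    and small: "(\<Sum>p | prime p \<and> p \<le> q \<and> \<psi> p \<noteq> 1. 1 / real p) < real J * (\<epsilon> / (1 + \<epsilon>) - 8 / Y - t)"
  shows "\<exists>a b. 0 < a \<and> 0 < b \<and> ln a = ln b / (1 + \<epsilon>) \<and> Y \<le> ln a \<and> ln b \<le> ln (real q) \<and>
    t \<le> (\<Sum>p | prime p \<and> a < real p \<and> real p \<le> b \<and> \<psi> p = 1. 1 / real p)"
proof -
  define l where "l i = ln (real q) / (1 + \<epsilon>) ^ i" for i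
  define I where "I i = {p. prime p \<and> exp (l (Suc i)) < real p \<and> real p \<le> exp (l i)}" for i
  have l_Suc: "l (Suc i) = l i / (1 + \<epsilon>)" for i
    by (simp add: l_def field_simps)
  have "0 < Y * (1 + \<epsilon>) ^ J"
    using \<open>0 < \<epsilon>\<close> \<open>0 < Y\<close> by simp
  with J have "0 < ln (real q)"
    by linarith
  then have "decseq l"
    using \<open>0 < \<epsilon>\<close> by (auto simp: decseq_def l_def intro!: divide_left_mono power_increasing)
  have "0 < real q"
    using \<open>0 < ln (real q)\<close> by (cases "q = 0") simp_all
  have "Y \<le> l J"
    using J \<open>0 < \<epsilon>\<close> by (simp add: l_def pos_le_divide_eq)
  then have l_ge: "Y \<le> l i" if "i \<le> J" for i
    using decseqD [OF \<open>decseq l\<close> that] by simp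
  have mass: "\<epsilon> / (1 + \<epsilon>) - 8 / Y \<le> (\<Sum>p\<in>I i. 1 / real p)" if "i < J" for i
    unfolding I_def l_Suc using l_ge [of "Suc i"] that
    by (intro sum_inverse_primes_geometric_interval_ge \<open>0 < \<epsilon>\<close> \<open>0 < Y\<close>) (simp_all add: l_Suc)
  have "\<exists>i<J. t \<le> (\<Sum>p | p \<in> I i \<and> \<psi> p = 1. 1 / real p)"
  proof (rule exists_part_with_large_mass [OF _ _ _ _ mass])
    have "exp (l i) \<le> exp (l 0)" for i
      using decseqD [OF \<open>decseq l\<close>, of 0 i] by simp
    then have exp_l_le: "exp (l i) \<le> real q" for i
      using \<open>0 < real q\<close> by (simp add: l_def)
    show "I i \<subseteq> {p. prime p \<and> p \<le> q}" for i
    proof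
      fix p assume "p \<in> I i"
      then have "prime p" "real p \<le> real q"
        using exp_l_le [of i] by (auto simp: I_def)
      then show "p \<in> {p. prime p \<and> p \<le> q}"
        by simp
    qed
    have "decseq (\<lambda>i. exp (l i))"
      using \<open>decseq l\<close> by (simp add: decseq_def)
    then show "disjoint_family_on I {..<J}"
      unfolding I_def by (rule disjoint_family_on_mono [OF subset_UNIV disjoint_family_prime_intervals])
    show "(\<Sum>p | p \<in> {p. prime p \<and> p \<le> q} \<and> \<psi> p \<noteq> 1. 1 / real p)
        < real J * (\<epsilon> / (1 + \<epsilon>) - 8 / Y - t)"
      using small by simp
  qed auto
  then obtain i where "i < J" and "t \<le> (\<Sum>p | p \<in> I i \<and> \<psi> p = 1. 1 / real p)"
    by blast
  moreover have "Y \<le> l (Suc i)" "l i \<le> ln (real q)"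
    using l_ge [of "Suc i"] \<open>i < J\<close> decseqD [OF \<open>decseq l\<close>, of 0 i] by (simp_all add: l_def)
  ultimately show ?thesis
    by (intro exI [of _ "exp (l (Suc i))"] exI [of _ "exp (l i)"]) (simp add: I_def l_Suc)
qed

section \<open>Choice of parameters\<close>

lemma exists_nat_power_le_exp:
  fixes \<epsilon> s :: real
  assumes "0 < \<epsilon>" "0 \<le> s"
  shows "\<exists>J::nat. (1 + \<epsilon>) ^ J \<le> exp s \<and> s - \<epsilon> \<le> real J * \<epsilon>"
proof -
  define J where "J = nat \<lfloor>s / ln (1 + \<epsilon>)\<rfloor>"
  have "0 < ln (1 + \<epsilon>)" "ln (1 + \<epsilon>) \<le> \<epsilon>"
    using \<open>0 < \<epsilon>\<close> by (simp_all add: ln_add_one_self_le_self)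
  then have J: "real J \<le> s / ln (1 + \<epsilon>)" "s / ln (1 + \<epsilon>) - 1 \<le> real J"
    using \<open>0 \<le> s\<close> by (simp_all add: J_def)
  have "(1 + \<epsilon>) ^ J = exp (real J * ln (1 + \<epsilon>))"
    using \<open>0 < \<epsilon>\<close> by (simp add: exp_of_nat_mult)
  also have "\<dots> \<le> exp s"
    using J(1) \<open>0 < ln (1 + \<epsilon>)\<close> by (simp add: pos_le_divide_eq)
  finally have "(1 + \<epsilon>) ^ J \<le> exp s" .
  moreover have "s - \<epsilon> \<le> real J * \<epsilon>"
  proof -
    have "s * ln (1 + \<epsilon>) \<le> s * \<epsilon>"
      using \<open>ln (1 + \<epsilon>) \<le> \<epsilon>\<close> \<open>0 \<le> s\<close> by (rule mult_left_mono)
    then have "s - \<epsilon> \<le> (s / ln (1 + \<epsilon>) - 1) * \<epsilon>"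
      using \<open>0 < ln (1 + \<epsilon>)\<close> by (simp add: field_simps)
    also have "\<dots> \<le> real J * \<epsilon>"
      using \<open>0 < \<epsilon>\<close> by (intro mult_right_mono [OF J(2)]) simp
    finally show ?thesis .
  qed
  ultimately show ?thesis
    by blast
qed

lemma exists_interval_with_large_kernel_mass_if_nonkernel_small:
  fixes q :: nat and \<psi> :: "nat \<Rightarrow> complex" and ca cb \<mu> :: real
  defines "lg \<equiv> ln (real q)"
  defines "\<epsilon> \<equiv> lg powr (cb - 1)" and "Y \<equiv> lg powr (1 - ca)"
  assumes "1 < lg" "0 < ca" "0 < \<mu>" "\<mu> \<le> 1 / 8" "\<epsilon> \<le> \<mu>" "8 / Y \<le> \<mu> * \<epsilon>"
    and small: "(\<Sum>p | prime p \<and> p \<le> q \<and> \<psi> p \<noteq> 1. 1 / real p) < (ca * ln lg - 1) * (1 - 3 * \<mu>)"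
  shows "\<exists>a b. 0 < a \<and> 0 < b \<and> ln a = ln b / (1 + \<epsilon>) \<and> Y \<le> ln a \<and> ln b \<le> lg \<and>
    \<mu> * \<epsilon> \<le> (\<Sum>p | prime p \<and> a < real p \<and> real p \<le> b \<and> \<psi> p = 1. 1 / real p)"
proof -
  have "0 < \<epsilon>" "0 < Y" "0 < ln lg"
    using \<open>1 < lg\<close> by (simp_all add: \<epsilon>_def Y_def)
  then obtain J :: nat where J: "(1 + \<epsilon>) ^ J \<le> exp (ca * ln lg)" "ca * ln lg - \<epsilon> \<le> real J * \<epsilon>"
    using exists_nat_power_le_exp [of \<epsilon> "ca * ln lg"] \<open>0 < ca\<close> by auto
  have "Y * (1 + \<epsilon>) ^ J \<le> Y * exp (ca * ln lg)"
    using J(1) \<open>0 < Y\<close> by simp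
  also have "\<dots> = ln (real q)"
    using \<open>1 < lg\<close> by (simp add: lg_def Y_def powr_def left_diff_distrib exp_diff)
  finally have "Y * (1 + \<epsilon>) ^ J \<le> ln (real q)" .
  moreover have "(\<Sum>p | prime p \<and> p \<le> q \<and> \<psi> p \<noteq> 1. 1 / real p)
      < real J * (\<epsilon> / (1 + \<epsilon>) - 8 / Y - \<mu> * \<epsilon>)"
  proof -
    have "0 \<le> \<mu> * \<epsilon>"
      using \<open>0 < \<mu>\<close> \<open>0 < \<epsilon>\<close> by simp
    then have "(1 - \<mu>) * (1 + \<epsilon>) \<le> 1"
      using \<open>\<epsilon> \<le> \<mu>\<close> by (simp add: algebra_simps)
    then have "\<epsilon> * (1 - \<mu>) * (1 + \<epsilon>) \<le> \<epsilon>"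
      using \<open>0 < \<epsilon>\<close> mult_left_le [of "(1 - \<mu>) * (1 + \<epsilon>)" \<epsilon>] by (simp add: mult.assoc)
    then have "\<epsilon> * (1 - \<mu>) \<le> \<epsilon> / (1 + \<epsilon>)"
      using \<open>0 < \<epsilon>\<close> by (simp add: pos_le_divide_eq)
    then have "\<epsilon> * (1 - 3 * \<mu>) \<le> \<epsilon> / (1 + \<epsilon>) - 8 / Y - \<mu> * \<epsilon>"
      using \<open>8 / Y \<le> \<mu> * \<epsilon>\<close> by (simp add: algebra_simps)
    then have "real J * (\<epsilon> * (1 - 3 * \<mu>)) \<le> real J * (\<epsilon> / (1 + \<epsilon>) - 8 / Y - \<mu> * \<epsilon>)"
      by (rule mult_left_mono) simp
    moreover have "(ca * ln lg - 1) * (1 - 3 * \<mu>) \<le> real J * \<epsilon> * (1 - 3 * \<mu>)"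
      using J(2) \<open>\<epsilon> \<le> \<mu>\<close> \<open>\<mu> \<le> 1 / 8\<close> by (intro mult_right_mono) auto
    ultimately show ?thesis
      using small by (simp add: mult.assoc)
  qed
  ultimately show ?thesis
    unfolding lg_def by (rule exists_interval_with_large_kernel_mass [OF \<open>0 < \<epsilon>\<close> \<open>0 < Y\<close>])
qed

lemma exists_nat_mult_between:
  fixes Y \<beta> L :: real
  assumes "0 < Y" "Y \<le> \<beta>" "\<beta> \<le> L"
  shows "\<exists>k::nat. 1 \<le> k \<and> real k \<le> L / Y + 1 \<and> L \<le> real k * \<beta> \<and> real k * \<beta> \<le> 2 * L"
proof -
  define k where "k = nat \<lceil>L / \<beta>\<rceil>"
  have "1 \<le> L / \<beta>" "L / \<beta> \<le> L / Y"
    using assms by (simp_all add: divide_left_mono)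
  then have k: "L / \<beta> \<le> real k" "real k \<le> L / \<beta> + 1"
    by (simp_all add: k_def)
  then have "L \<le> real k * \<beta>" "real k * \<beta> \<le> 2 * L"
    using assms by (simp_all add: field_simps)
  moreover have "1 \<le> k" "real k \<le> L / Y + 1"
    using k \<open>1 \<le> L / \<beta>\<close> \<open>L / \<beta> \<le> L / Y\<close> by linarith+
  ultimately show ?thesis
    by blast
qed

lemma ln_order_bound_terms_le:
  fixes k K \<epsilon> x y L m :: real
  assumes "1 \<le> k" "k \<le> K" "0 \<le> \<epsilon>" "0 \<le> x" "y = x + \<epsilon> * x" "k * y \<le> 2 * L" "0 < m" "m \<le> 1"
  shows "k * (y - x) + k * ln k - k * ln m \<le> 2 * (\<epsilon> * L) + K * (ln K - ln m)"
proof -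
  have "k * (y - x) = \<epsilon> * (k * x)"
    using assms(5) by (simp add: algebra_simps)
  also have "\<dots> \<le> \<epsilon> * (2 * L)"
  proof (rule mult_left_mono)
    have "k * x \<le> k * y"
      using assms by (intro mult_left_mono) auto
    then show "k * x \<le> 2 * L"
      using assms(6) by linarith
  qed (rule assms(3))
  finally have "k * (y - x) \<le> 2 * (\<epsilon> * L)"
    by simp
  moreover have "k * ln k \<le> K * ln K"
    using assms(1,2) by (intro mult_mono ln_mono) auto
  moreover have "- (k * ln m) \<le> - (K * ln m)"
    using assms by (simp add: mult_right_mono_neg)
  ultimately show ?thesis
    by (simp add: algebra_simps)
qed

lemma ln_character_order_lt_if_kernel_mass:
  fixes q :: nat and \<psi> :: "nat \<Rightarrow> complex" and ca cb \<mu> :: real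
  defines "lg \<equiv> ln (real q)"
  defines "\<epsilon> \<equiv> lg powr (cb - 1)" and "Y \<equiv> lg powr (1 - ca)"
  assumes \<psi>: "dirichlet_character q \<psi>"
    and "1 < lg" "cb < 1" "0 < \<mu>" "\<mu> \<le> 1"
    and "0 < a" "0 < b" "ln a = ln b / (1 + \<epsilon>)" "Y \<le> ln a" "ln b \<le> lg"
    and mass: "\<mu> * \<epsilon> \<le> (\<Sum>p | prime p \<and> a < real p \<and> real p \<le> b \<and> \<psi> p = 1. 1 / real p)"
    and many_primes: "lg powr ca + 1 \<le> \<mu> * \<epsilon> * exp Y"
    and small: "ln 2 + 2 * lg powr cb
      + (lg powr ca + 1) * (ln (lg powr ca + 1) + ln (1 / \<mu>) + (1 - cb) * ln lg) < lg powr c"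
  shows "ln (real (character_order q \<psi>)) < lg powr c"
proof -
  have "0 < \<epsilon>" "\<epsilon> \<le> 1" "0 < Y"
    using \<open>1 < lg\<close> \<open>cb < 1\<close> powr_mono [of "cb - 1" 0 lg] by (simp_all add: \<epsilon>_def Y_def)
  then have "0 < ln a"
    using \<open>Y \<le> ln a\<close> by linarith
  moreover have ln_b: "ln b = ln a + \<epsilon> * ln a"
    using \<open>ln a = ln b / (1 + \<epsilon>)\<close> \<open>0 < \<epsilon>\<close> by (simp add: field_simps)
  moreover have "0 \<le> \<epsilon> * ln a"
    using \<open>0 < \<epsilon>\<close> \<open>0 < ln a\<close> by simp
  ultimately have "Y \<le> ln b"
    using \<open>Y \<le> ln a\<close> by linarith
  moreover have "lg / Y = lg powr ca"
    using \<open>1 < lg\<close> by (simp add: Y_def powr_diff)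
  ultimately obtain k :: nat where "1 \<le> k" and k_lg: "real k \<le> lg powr ca + 1"
    and k_ln_b: "lg \<le> real k * ln b" "real k * ln b \<le> 2 * lg"
    using exists_nat_mult_between [of Y "ln b" lg] \<open>0 < Y\<close> \<open>ln b \<le> lg\<close> by auto
  have "ln (real (character_order q \<psi>))
      \<le> ln 2 + real k * (ln b - ln a) + real k * ln (real k) - real k * ln (\<mu> * \<epsilon>)"
  proof (rule ln_character_order_le_of_kernel_mass [OF \<psi> \<open>0 < a\<close> \<open>0 < b\<close> _ \<open>1 \<le> k\<close> _ _ mass])
    show "0 < \<mu> * \<epsilon>"
      using \<open>0 < \<mu>\<close> \<open>0 < \<epsilon>\<close> by simp
    have "exp Y \<le> a"
      using \<open>Y \<le> ln a\<close> \<open>0 < a\<close> exp_le_cancel_iff [of Y "ln a"] by simp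
    then have "\<mu> * \<epsilon> * exp Y \<le> \<mu> * \<epsilon> * a"
      using \<open>0 < \<mu>\<close> \<open>0 < \<epsilon>\<close> by (intro mult_left_mono) auto
    then show "real k \<le> \<mu> * \<epsilon> * a"
      using k_lg many_primes by linarith
  qed (use \<open>0 < b\<close> k_ln_b in \<open>simp_all add: lg_def\<close>)
  also have "\<dots> \<le> ln 2 + 2 * (\<epsilon> * lg) + (lg powr ca + 1) * (ln (lg powr ca + 1) - ln (\<mu> * \<epsilon>))"
    using \<open>1 \<le> k\<close> k_lg \<open>0 < \<epsilon>\<close> \<open>0 < ln a\<close> ln_b k_ln_b(2) \<open>0 < \<mu>\<close> \<open>\<mu> \<le> 1\<close> \<open>\<epsilon> \<le> 1\<close>
      ln_order_bound_terms_le [of "real k" "lg powr ca + 1" \<epsilon> "ln a" "ln b" lg "\<mu> * \<epsilon>"]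
    by (simp add: mult_le_one)
  also have "\<dots> = ln 2 + 2 * lg powr cb
      + (lg powr ca + 1) * (ln (lg powr ca + 1) + ln (1 / \<mu>) + (1 - cb) * ln lg)"
    using \<open>0 < \<mu>\<close> \<open>1 < lg\<close> by (simp add: \<epsilon>_def powr_diff ln_mult ln_div algebra_simps)
  also have "\<dots> < lg powr c"
    by (rule small)
  finally show ?thesis .
qed

lemma sum_nonkernel_prime_reciprocals_ge:
  fixes q :: nat and \<psi> :: "nat \<Rightarrow> complex" and c \<eta> ca cb \<mu> :: real
  defines "lg \<equiv> ln (real q)"
  defines "\<epsilon> \<equiv> lg powr (cb - 1)" and "Y \<equiv> lg powr (1 - ca)"
  assumes \<psi>: "dirichlet_character q \<psi>" and order: "exp (lg powr c) \<le> real (character_order q \<psi>)"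
    and "1 < lg" "0 < ca" "cb < 1" "0 < \<mu>" "\<mu> \<le> 1 / 8" "\<epsilon> \<le> \<mu>" "8 / Y \<le> \<mu> * \<epsilon>"
    and mass_gain: "(c - \<eta>) * ln lg \<le> (ca * ln lg - 1) * (1 - 3 * \<mu>)"
    and many_primes: "lg powr ca + 1 \<le> \<mu> * \<epsilon> * exp Y"
    and small: "ln 2 + 2 * lg powr cb
      + (lg powr ca + 1) * (ln (lg powr ca + 1) + ln (1 / \<mu>) + (1 - cb) * ln lg) < lg powr c"
  shows "(c - \<eta>) * ln lg \<le> (\<Sum>p | prime p \<and> p \<le> q \<and> \<psi> p \<noteq> 1. 1 / real p)"
proof (rule ccontr)
  assume "\<not> ?thesis"
  with mass_gain have "(\<Sum>p | prime p \<and> p \<le> q \<and> \<psi> p \<noteq> 1. 1 / real p)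
      < (ca * ln lg - 1) * (1 - 3 * \<mu>)"
    by linarith
  then obtain a b where "0 < a" "0 < b" "ln a = ln b / (1 + \<epsilon>)" "Y \<le> ln a" "ln b \<le> lg"
    and "\<mu> * \<epsilon> \<le> (\<Sum>p | prime p \<and> a < real p \<and> real p \<le> b \<and> \<psi> p = 1. 1 / real p)"
    using exists_interval_with_large_kernel_mass_if_nonkernel_small
        [where q = q and ca = ca and cb = cb and \<mu> = \<mu> and \<psi> = \<psi>, folded lg_def, folded \<epsilon>_def Y_def,
        OF \<open>1 < lg\<close> \<open>0 < ca\<close> \<open>0 < \<mu>\<close> \<open>\<mu> \<le> 1 / 8\<close> \<open>\<epsilon> \<le> \<mu>\<close> \<open>8 / Y \<le> \<mu> * \<epsilon>\<close>]
    by blast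
  then have "ln (real (character_order q \<psi>)) < lg powr c"
    using \<open>\<mu> \<le> 1 / 8\<close>
    by (intro ln_character_order_lt_if_kernel_mass
        [where q = q and ca = ca and cb = cb, folded lg_def, folded \<epsilon>_def Y_def,
         OF \<psi> \<open>1 < lg\<close> \<open>cb < 1\<close> \<open>0 < \<mu>\<close> _ _ _ _ _ _ _ many_primes small]) auto
  moreover have "lg powr c \<le> ln (real (character_order q \<psi>))"
    using ln_mono [OF order exp_gt_zero] by simp
  ultimately show False
    by simp
qed

lemma eventually_parameter_conditions:
  fixes c \<eta> ca cb \<mu> :: real
  assumes "0 < ca" "ca < cb" "cb < c" "c < 1" "0 < \<mu>" "c - \<eta> < ca * (1 - 3 * \<mu>)"
  shows "eventually (\<lambda>lg. 1 < lg \<and> lg powr (cb - 1) \<le> \<mu>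
    \<and> 8 / lg powr (1 - ca) \<le> \<mu> * lg powr (cb - 1)
    \<and> (c - \<eta>) * ln lg \<le> (ca * ln lg - 1) * (1 - 3 * \<mu>)
    \<and> lg powr ca + 1 \<le> \<mu> * lg powr (cb - 1) * exp (lg powr (1 - ca))
    \<and> ln 2 + 2 * lg powr cb
      + (lg powr ca + 1) * (ln (lg powr ca + 1) + ln (1 / \<mu>) + (1 - cb) * ln lg)
      < lg powr c) at_top"
proof -
  define \<kappa> where "\<kappa> = ca * (1 - 3 * \<mu>) - (c - \<eta>)"
  have "0 < \<kappa>"
    using assms(6) by (simp add: \<kappa>_def)
  have mass_gain: "(c - \<eta>) * ln lg \<le> (ca * ln lg - 1) * (1 - 3 * \<mu>)"
    if "(1 - 3 * \<mu>) / \<kappa> \<le> ln lg" for lg :: real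
    using that \<open>0 < \<kappa>\<close> by (simp add: \<kappa>_def pos_divide_le_eq algebra_simps)
  have "eventually (\<lambda>lg::real. (1 - 3 * \<mu>) / \<kappa> \<le> ln lg) at_top"
    by real_asymp
  moreover have "eventually (\<lambda>lg::real. 1 < lg) at_top"
    by real_asymp
  moreover have "eventually (\<lambda>lg. lg powr (cb - 1) \<le> \<mu>) at_top"
    using assms by real_asymp
  moreover have "eventually (\<lambda>lg. 8 / lg powr (1 - ca) \<le> \<mu> * lg powr (cb - 1)) at_top"
    using assms by real_asymp
  moreover have
    "eventually (\<lambda>lg. lg powr ca + 1 \<le> \<mu> * lg powr (cb - 1) * exp (lg powr (1 - ca))) at_top"
    using assms by real_asymp
  moreover have "eventually (\<lambda>lg. ln 2 + 2 * lg powr cb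
      + (lg powr ca + 1) * (ln (lg powr ca + 1) + ln (1 / \<mu>) + (1 - cb) * ln lg)
      < lg powr c) at_top"
    using assms by real_asymp
  ultimately show ?thesis
    by eventually_elim (use mass_gain in blast)
qed

lemma eventually_sum_nonkernel_prime_reciprocals_ge:
  fixes c \<eta> :: real
  assumes "0 < \<eta>" "\<eta> < c" "c < 1"
  shows "eventually (\<lambda>q. \<forall>\<psi>. dirichlet_character q \<psi>
      \<and> exp (ln (real q) powr c) \<le> real (character_order q \<psi>) \<longrightarrow>
    (c - \<eta>) * ln (ln (real q)) \<le> (\<Sum>p | prime p \<and> p \<le> q \<and> \<psi> p \<noteq> 1. 1 / real p)) sequentially"
proof -
  define ca cb \<mu> where "ca = c - \<eta> / 2" and "cb = c - \<eta> / 4" and "\<mu> = \<eta> / 8"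
  have "ca * (1 - 3 * \<mu>) = c - \<eta> + \<eta> * (1 / 2 - 3 / 8 * c + 3 / 16 * \<eta>)"
    by (simp add: ca_def \<mu>_def field_simps)
  moreover have "0 < \<eta> * (1 / 2 - 3 / 8 * c + 3 / 16 * \<eta>)"
    using assms by (intro mult_pos_pos) auto
  ultimately have params: "0 < ca" "ca < cb" "cb < c" "0 < \<mu>" "\<mu> \<le> 1 / 8" "c - \<eta> < ca * (1 - 3 * \<mu>)"
    using assms by (simp_all add: ca_def cb_def \<mu>_def)
  have "filterlim (\<lambda>q. ln (real q)) at_top sequentially"
    by real_asymp
  with eventually_parameter_conditions [OF params(1-3) \<open>c < 1\<close> params(4,6)]
  show ?thesis
    by (rule eventually_compose_filterlim [THEN eventually_mono])
      (use params assms in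
        \<open>auto intro!: sum_nonkernel_prime_reciprocals_ge [where ca = ca and cb = cb and \<mu> = \<mu>]\<close>)
qed

lemma sum_nonkernel_prime_reciprocals_ge_nonpos:
  fixes c \<eta> :: real and \<psi> :: "nat \<Rightarrow> complex"
  assumes "c \<le> \<eta>" "3 \<le> q"
  shows "(c - \<eta>) * ln (ln (real q)) \<le> (\<Sum>p | prime p \<and> p \<le> q \<and> \<psi> p \<noteq> 1. 1 / real p)"
proof -
  have "exp 1 \<le> real q"
    using exp_le assms(2) by linarith
  then have "0 \<le> ln (ln (real q))"
    using assms(2) by (simp add: ln_ge_iff)
  then have "(c - \<eta>) * ln (ln (real q)) \<le> 0"
    using assms(1) by (simp add: mult_nonpos_nonneg)
  also have "\<dots> \<le> (\<Sum>p | prime p \<and> p \<le> q \<and> \<psi> p \<noteq> 1. 1 / real p)"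
    by (intro sum_nonneg) simp
  finally show ?thesis .
qed

theorem proposition4p1:
  fixes c :: real
  assumes "0 < c" and "c < 1"
  shows "\<forall>\<eta>>0. \<exists>q0::nat. \<forall>q\<ge>q0. \<forall>\<psi>::nat \<Rightarrow> complex.
    primitive_character q \<psi> \<and> real (character_order q \<psi>) \<ge> exp ((ln (real q)) powr c) \<longrightarrow>
    (\<Sum>p | prime p \<and> p \<le> q \<and> \<psi> p \<noteq> 1. 1 / real p) \<ge> (c - \<eta>) * ln (ln (real q))"
proof (intro allI impI)
  fix \<eta> :: real
  assume "\<eta> > 0"
  have "eventually (\<lambda>q. \<forall>\<psi>. dirichlet_character q \<psi>
      \<and> exp (ln (real q) powr c) \<le> real (character_order q \<psi>) \<longrightarrow>
    (c - \<eta>) * ln (ln (real q)) \<le> (\<Sum>p | prime p \<and> p \<le> q \<and> \<psi> p \<noteq> 1. 1 / real p)) sequentially"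
  proof (cases "\<eta> < c")
    case True
    show ?thesis
      using \<open>\<eta> > 0\<close> True \<open>c < 1\<close> by (rule eventually_sum_nonkernel_prime_reciprocals_ge)
  next
    case False
    then show ?thesis
      by (intro eventually_sequentiallyI [of 3] allI impI sum_nonkernel_prime_reciprocals_ge_nonpos)
        auto
  qed
  then show "\<exists>q0::nat. \<forall>q\<ge>q0. \<forall>\<psi>::nat \<Rightarrow> complex.
    primitive_character q \<psi> \<and> real (character_order q \<psi>) \<ge> exp ((ln (real q)) powr c) \<longrightarrow>
    (\<Sum>p | prime p \<and> p \<le> q \<and> \<psi> p \<noteq> 1. 1 / real p) \<ge> (c - \<eta>) * ln (ln (real q))"
    by (auto simp: eventually_sequentially primitive_character_def)
qed

end
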